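(* Let $\sigma$ be a set of atomic propositions and $P$ a finite set of proposition symbols disjoint from $\sigma$. For every set $L\subseteq L_\mu[\sigma\cup P]$ we have $\mathrm{CL}_P(\mathrm{CL}_P(L))=\mathrm{CL}_P(L)$.
   Context: $L_\mu[\tau]$ is the modal $\mu$-calculus over propositions $\tau$: formulas from $\top,\bot$, $R,\neg R$, fixpoint variables, $\wedge,\vee,\Diamond,\Box,\mu X.\cdot,\nu X.\cdot$. **Closure $\mathrm{CL}$.** For a formula $\varphi$, $\mathrm{CL}(\varphi)$ is its Fischer–Ladner closure: for each occurrence of a non-variable subformula $\psi$ of $\varphi$, the closed formula obtained from $\psi$ by repeatedly replacing free fixpoint variables by their defining fixpoint subformulas $\mu X.\chi$ or $\nu X.\chi$ in $\varphi$. $\mathrm{CL}(L)=\bigcup_{\varphi\in L}\mathrm{CL}(\varphi)$ (as a set of formulas). **Priority tracking variants.** A priority tracking variant of $\varphi$ is obtained by applying, for each subformula occurrence of the form $\Diamond\chi$ or $\Box\chi$, the following operation with a freely chosen $Q\subseteq P$: - replace $\Diamond\chi$ by $(\bigvee_{R\in Q}R)\vee\Diamond\chi$; - replace $\Box\chi$ by $(\bigwedge_{R\in Q}\neg R)\wedge\Box\chi$. $\mathrm{PT}_P(\varphi)$ is the set of all such variants, $\mathrm{PT}_P(L)=\bigcup_{\varphi\in L}\mathrm{PT}_P(\varphi)$, and $\mathrm{CL}_P(L)=\mathrm{PT}_P(\mathrm{CL}(L))$. *)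

theory Defs
  imports Main
begin

text \<open>Syntax of the modal mu-calculus over propositions of type 'a, with fixpoint
variables as de Bruijn indices (Var 0 refers to the innermost enclosing binder).
The modal constructors carry a finite set Q of propositions:
  Dia Q chi  stands for  (OR of R for R in Q) \<or> Dia chi,
  Box Q chi  stands for  (AND of not R for R in Q) \<and> Box chi.
Plain modalities are Dia {} chi and Box {} chi.\<close>

datatype 'a fm =
    Top | Bot | Prop 'a | NProp 'a | Var nat
  | And "'a fm" "'a fm" | Or "'a fm" "'a fm"
  | Dia "'a set" "'a fm" | Box "'a set" "'a fm"
  | Mu "'a fm" | Nu "'a fm"

fun lift :: "nat \<Rightarrow> 'a fm \<Rightarrow> 'a fm" where
  "lift k (Var n) = (if n < k then Var n else Var (Suc n))"
| "lift k (And a b) = And (lift k a) (lift k b)"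
| "lift k (Or a b) = Or (lift k a) (lift k b)"
| "lift k (Dia Q a) = Dia Q (lift k a)"
| "lift k (Box Q a) = Box Q (lift k a)"
| "lift k (Mu a) = Mu (lift (Suc k) a)"
| "lift k (Nu a) = Nu (lift (Suc k) a)"
| "lift k Top = Top"
| "lift k Bot = Bot"
| "lift k (Prop r) = Prop r"
| "lift k (NProp r) = NProp r"

fun subst :: "(nat \<Rightarrow> 'a fm) \<Rightarrow> 'a fm \<Rightarrow> 'a fm" where
  "subst \<rho> (Var n) = \<rho> n"
| "subst \<rho> (And a b) = And (subst \<rho> a) (subst \<rho> b)"
| "subst \<rho> (Or a b) = Or (subst \<rho> a) (subst \<rho> b)"
| "subst \<rho> (Dia Q a) = Dia Q (subst \<rho> a)"
| "subst \<rho> (Box Q a) = Box Q (subst \<rho> a)"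
| "subst \<rho> (Mu a) = Mu (subst (case_nat (Var 0) (lift 0 \<circ> \<rho>)) a)"
| "subst \<rho> (Nu a) = Nu (subst (case_nat (Var 0) (lift 0 \<circ> \<rho>)) a)"
| "subst \<rho> Top = Top"
| "subst \<rho> Bot = Bot"
| "subst \<rho> (Prop r) = Prop r"
| "subst \<rho> (NProp r) = NProp r"

text \<open>cls rho psi: for every non-variable subformula occurrence of psi, the formula
obtained by replacing its free fixpoint variables by (the expansions of) their
defining fixpoint subformulas; rho maps the free indices of psi to those expansions.\<close>
fun cls :: "(nat \<Rightarrow> 'a fm) \<Rightarrow> 'a fm \<Rightarrow> 'a fm set" where
  "cls \<rho> (Var n) = {}"
| "cls \<rho> (And a b) = {subst \<rho> (And a b)} \<union> cls \<rho> a \<union> cls \<rho> b"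
| "cls \<rho> (Or a b) = {subst \<rho> (Or a b)} \<union> cls \<rho> a \<union> cls \<rho> b"
| "cls \<rho> (Dia Q a) = {subst \<rho> (Dia Q a)} \<union> cls \<rho> a"
| "cls \<rho> (Box Q a) = {subst \<rho> (Box Q a)} \<union> cls \<rho> a"
| "cls \<rho> (Mu a) = {subst \<rho> (Mu a)} \<union> cls (case_nat (subst \<rho> (Mu a)) \<rho>) a"
| "cls \<rho> (Nu a) = {subst \<rho> (Nu a)} \<union> cls (case_nat (subst \<rho> (Nu a)) \<rho>) a"
| "cls \<rho> Top = {Top}"
| "cls \<rho> Bot = {Bot}"
| "cls \<rho> (Prop r) = {Prop r}"
| "cls \<rho> (NProp r) = {NProp r}"

definition CL :: "'a fm \<Rightarrow> 'a fm set" where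
  "CL \<phi> = cls Var \<phi>"

definition CLs :: "'a fm set \<Rightarrow> 'a fm set" where
  "CLs L = (\<Union>\<phi>\<in>L. CL \<phi>)"

text \<open>Priority tracking variants: at every modal occurrence a set Q' \<subseteq> P is chosen
and added as disjuncts (resp. negated conjuncts); adding Q' to an already
annotated modality Q yields the annotation Q \<union> Q'.\<close>
fun PT :: "'a set \<Rightarrow> 'a fm \<Rightarrow> 'a fm set" where
  "PT P (Var n) = {Var n}"
| "PT P (And a b) = {And a' b' | a' b'. a' \<in> PT P a \<and> b' \<in> PT P b}"
| "PT P (Or a b) = {Or a' b' | a' b'. a' \<in> PT P a \<and> b' \<in> PT P b}"
| "PT P (Dia Q a) = {Dia (Q \<union> Q') a' | Q' a'. Q' \<subseteq> P \<and> a' \<in> PT P a}"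
| "PT P (Box Q a) = {Box (Q \<union> Q') a' | Q' a'. Q' \<subseteq> P \<and> a' \<in> PT P a}"
| "PT P (Mu a) = Mu ` PT P a"
| "PT P (Nu a) = Nu ` PT P a"
| "PT P Top = {Top}"
| "PT P Bot = {Bot}"
| "PT P (Prop r) = {Prop r}"
| "PT P (NProp r) = {NProp r}"

definition PTs :: "'a set \<Rightarrow> 'a fm set \<Rightarrow> 'a fm set" where
  "PTs P L = (\<Union>\<phi>\<in>L. PT P \<phi>)"

definition CL_P :: "'a set \<Rightarrow> 'a fm set \<Rightarrow> 'a fm set" where
  "CL_P P L = PTs P (CLs L)"

fun plain :: "'a fm \<Rightarrow> bool" where
  "plain (And a b) = (plain a \<and> plain b)"
| "plain (Or a b) = (plain a \<and> plain b)"
| "plain (Dia Q a) = (Q = {} \<and> plain a)"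
| "plain (Box Q a) = (Q = {} \<and> plain a)"
| "plain (Mu a) = plain a"
| "plain (Nu a) = plain a"
| "plain _ = True"

fun props :: "'a fm \<Rightarrow> 'a set" where
  "props (Prop r) = {r}"
| "props (NProp r) = {r}"
| "props (And a b) = props a \<union> props b"
| "props (Or a b) = props a \<union> props b"
| "props (Dia Q a) = Q \<union> props a"
| "props (Box Q a) = Q \<union> props a"
| "props (Mu a) = props a"
| "props (Nu a) = props a"
| "props _ = {}"

definition Lmu :: "'a set \<Rightarrow> 'a fm set" where
  "Lmu \<tau> = {\<phi>. plain \<phi> \<and> props \<phi> \<subseteq> \<tau>}"

end

theory Submission
  imports Defs
begin

text \<open>Both operators are idempotent. For the Fischer-Ladner closure this is because a
member of CL \<phi> is a subformula of \<phi> with fixpoint expansions substituted for its free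
variables, and the closure of a substitution instance consists of instances of subformulas
together with closures of the substituted formulas. For priority tracking variants it is
because annotating twice amounts to annotating once with the union of the chosen sets.
Moreover variants commute with substitution, so the closure of a variant consists of
variants of members of the closure. Hence PT (CL (PT (CL L))) \<subseteq> PT (PT (CL (CL L))) = PT (CL L),
and the converse inclusion follows from monotonicity.\<close>

definition skip :: "nat \<Rightarrow> nat \<Rightarrow> nat" where
  "skip k n = (if n < k then n else Suc n)"

abbreviation exts :: "(nat \<Rightarrow> 'a fm) \<Rightarrow> nat \<Rightarrow> 'a fm" where
  "exts \<rho> \<equiv> case_nat (Var 0) (lift 0 \<circ> \<rho>)"

lemma skip_0: "skip 0 = Suc"
  by (rule ext) (simp add: skip_def)

lemma case_nat_comp_Suc: "case_nat a f \<circ> Suc = f"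
  by (rule ext) simp

lemma case_nat_comp_skip_Suc: "case_nat a f \<circ> skip (Suc k) = case_nat a (f \<circ> skip k)"
  by (rule ext) (simp add: skip_def split: nat.split)

lemma lift_lift: "j \<le> k \<Longrightarrow> lift (Suc k) (lift j t) = lift j (lift k t)"
  by (induction t arbitrary: j k) auto

lemma lift_comp_exts: "lift (Suc k) \<circ> exts \<rho> = exts (lift k \<circ> \<rho>)"
  by (rule ext) (simp add: lift_lift split: nat.split)

lemma lift_subst: "lift k (subst \<rho> t) = subst (lift k \<circ> \<rho>) t"
  by (induction t arbitrary: k \<rho>) (simp_all add: lift_comp_exts)

lemma subst_lift: "subst \<rho> (lift k t) = subst (\<rho> \<circ> skip k) t"
  by (induction t arbitrary: k \<rho>) (simp_all add: skip_def case_nat_comp_skip_Suc comp_assoc)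

lemma subst_case_nat_comp_exts: "subst (case_nat s \<sigma>) \<circ> exts \<tau> = case_nat s (subst \<sigma> \<circ> \<tau>)"
  by (rule ext) (simp add: subst_lift skip_0 case_nat_comp_Suc split: nat.split)

lemma subst_exts_comp_exts: "subst (exts \<sigma>) \<circ> exts \<tau> = exts (subst \<sigma> \<circ> \<tau>)"
  by (rule ext) (simp add: subst_lift skip_0 case_nat_comp_Suc lift_subst split: nat.split)

lemma subst_subst: "subst \<sigma> (subst \<tau> t) = subst (subst \<sigma> \<circ> \<tau>) t"
  by (induction t arbitrary: \<sigma> \<tau>) (simp_all add: subst_exts_comp_exts)

lemma exts_Var: "exts Var = Var"
  by (rule ext) (simp split: nat.split)

lemma subst_Var: "subst Var t = t"
  by (induction t) (simp_all add: exts_Var)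

lemma cls_lift: "cls \<rho> (lift k t) = cls (\<rho> \<circ> skip k) t"
  by (induction t arbitrary: k \<rho>) (simp_all add: subst_lift case_nat_comp_skip_Suc comp_assoc)

lemma UN_cls_case_nat_exts: "(\<Union>n. cls (case_nat s \<sigma>) (exts \<tau> n)) = (\<Union>n. cls \<sigma> (\<tau> n))"
  by (auto simp: cls_lift skip_0 case_nat_comp_Suc split: nat.splits)

lemma cls_subst: "cls \<sigma> (subst \<tau> t) \<subseteq> cls (subst \<sigma> \<circ> \<tau>) t \<union> (\<Union>n. cls \<sigma> (\<tau> n))"
proof (induction t arbitrary: \<sigma> \<tau>)
  case (Mu t)
  define s where "s = subst (subst \<sigma> \<circ> \<tau>) (Mu t)"
  have "s = subst \<sigma> (Mu (subst (exts \<tau>) t))"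
    using subst_subst[of \<sigma> \<tau> "Mu t"] by (simp only: s_def subst.simps)
  then have "cls \<sigma> (subst \<tau> (Mu t)) = {s} \<union> cls (case_nat s \<sigma>) (subst (exts \<tau>) t)"
    by simp
  also have "\<dots> \<subseteq> {s} \<union> cls (case_nat s (subst \<sigma> \<circ> \<tau>)) t \<union> (\<Union>n. cls \<sigma> (\<tau> n))"
    using Mu.IH[of "case_nat s \<sigma>" "exts \<tau>"]
    by (auto simp only: subst_case_nat_comp_exts UN_cls_case_nat_exts)
  also have "\<dots> = cls (subst \<sigma> \<circ> \<tau>) (Mu t) \<union> (\<Union>n. cls \<sigma> (\<tau> n))"
    by (simp only: s_def cls.simps)
  finally show ?case .
next
  case (Nu t)
  define s where "s = subst (subst \<sigma> \<circ> \<tau>) (Nu t)"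
  have "s = subst \<sigma> (Nu (subst (exts \<tau>) t))"
    using subst_subst[of \<sigma> \<tau> "Nu t"] by (simp only: s_def subst.simps)
  then have "cls \<sigma> (subst \<tau> (Nu t)) = {s} \<union> cls (case_nat s \<sigma>) (subst (exts \<tau>) t)"
    by simp
  also have "\<dots> \<subseteq> {s} \<union> cls (case_nat s (subst \<sigma> \<circ> \<tau>)) t \<union> (\<Union>n. cls \<sigma> (\<tau> n))"
    using Nu.IH[of "case_nat s \<sigma>" "exts \<tau>"]
    by (auto simp only: subst_case_nat_comp_exts UN_cls_case_nat_exts)
  also have "\<dots> = cls (subst \<sigma> \<circ> \<tau>) (Nu t) \<union> (\<Union>n. cls \<sigma> (\<tau> n))"
    by (simp only: s_def cls.simps)
  finally show ?case .
next
  case (And t1 t2)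
  show ?case using And.IH[of \<sigma> \<tau>] by (simp only: subst.simps cls.simps subst_subst) blast
next
  case (Or t1 t2)
  show ?case using Or.IH[of \<sigma> \<tau>] by (simp only: subst.simps cls.simps subst_subst) blast
qed (auto simp: subst_subst)

lemma CL_subst: "CL (subst \<rho> t) \<subseteq> cls \<rho> t \<union> (\<Union>n. CL (\<rho> n))"
  using cls_subst[of Var \<rho> t] by (simp add: CL_def subst_Var comp_def)

lemma UN_CL_case_nat: "(\<Union>n. CL (case_nat s \<rho> n)) = CL s \<union> (\<Union>n. CL (\<rho> n))"
  by (auto split: nat.splits)

lemma UN_CL_cls: "(\<Union>x\<in>cls \<rho> t. CL x) \<subseteq> cls \<rho> t \<union> (\<Union>n. CL (\<rho> n))"
proof (induction t arbitrary: \<rho>)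
  case (Mu t)
  show ?case
    using Mu.IH[of "case_nat (subst \<rho> (Mu t)) \<rho>"] CL_subst[of \<rho> "Mu t"]
    by (auto simp only: cls.simps UN_CL_case_nat)
next
  case (Nu t)
  show ?case
    using Nu.IH[of "case_nat (subst \<rho> (Nu t)) \<rho>"] CL_subst[of \<rho> "Nu t"]
    by (auto simp only: cls.simps UN_CL_case_nat)
next
  case (And a b)
  show ?case using And.IH[of \<rho>] CL_subst[of \<rho> "And a b"] by (auto simp del: subst.simps)
next
  case (Or a b)
  show ?case using Or.IH[of \<rho>] CL_subst[of \<rho> "Or a b"] by (auto simp del: subst.simps)
next
  case (Dia Q a)
  show ?case using Dia.IH[of \<rho>] CL_subst[of \<rho> "Dia Q a"] by (auto simp del: subst.simps)
next
  case (Box Q a)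
  show ?case using Box.IH[of \<rho>] CL_subst[of \<rho> "Box Q a"] by (auto simp del: subst.simps)
qed (auto simp: CL_def)

lemma CL_subset_CL: "x \<in> CL \<phi> \<Longrightarrow> CL x \<subseteq> CL \<phi>"
  using UN_CL_cls[of Var \<phi>] by (auto simp: CL_def)

lemma Var_notin_cls: "Var n \<notin> cls \<rho> t"
  by (induction t arbitrary: \<rho>) auto

lemma CL_refl: "\<chi> \<in> CL \<phi> \<Longrightarrow> \<chi> \<in> CL \<chi>"
  using Var_notin_cls[of _ Var \<phi>] by (cases \<chi>) (auto simp: CL_def subst_Var exts_Var)

lemma PT_refl: "t \<in> PT P t"
  by (induction t) (auto intro!: exI[of _ "{}"])

lemma PT_trans: "t \<in> PT P u \<Longrightarrow> u \<in> PT P v \<Longrightarrow> t \<in> PT P v"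
proof (induction v arbitrary: t u)
  case (Dia Q v)
  then obtain Q1 Q2 v' where "t = Dia (Q \<union> Q1 \<union> Q2) v'" "Q1 \<union> Q2 \<subseteq> P" "v' \<in> PT P v"
    by auto
  then show ?case by (auto simp: Un_assoc)
next
  case (Box Q v)
  then obtain Q1 Q2 v' where "t = Box (Q \<union> Q1 \<union> Q2) v'" "Q1 \<union> Q2 \<subseteq> P" "v' \<in> PT P v"
    by auto
  then show ?case by (auto simp: Un_assoc)
qed fastforce+

lemma PT_lift: "t' \<in> PT P t \<Longrightarrow> lift k t' \<in> PT P (lift k t)"
  by (induction t arbitrary: t' k) fastforce+

lemma PT_exts: "\<forall>n. \<rho>' n \<in> PT P (\<rho> n) \<Longrightarrow> \<forall>n. exts \<rho>' n \<in> PT P (exts \<rho> n)"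
  by (auto intro: PT_lift split: nat.split)

lemma PT_case_nat:
  "t' \<in> PT P t \<Longrightarrow> \<forall>n. \<rho>' n \<in> PT P (\<rho> n) \<Longrightarrow> \<forall>n. case_nat t' \<rho>' n \<in> PT P (case_nat t \<rho> n)"
  by (auto split: nat.split)

lemma PT_subst:
  "t' \<in> PT P t \<Longrightarrow> \<forall>n. \<rho>' n \<in> PT P (\<rho> n) \<Longrightarrow> subst \<rho>' t' \<in> PT P (subst \<rho> t)"
proof (induction t arbitrary: t' \<rho> \<rho>')
  case (Mu t)
  then show ?case using Mu.IH[OF _ PT_exts] by auto
next
  case (Nu t)
  then show ?case using Nu.IH[OF _ PT_exts] by auto
qed fastforce+

lemma cls_PT_subset:
  assumes "\<theta> \<in> PT P t" and "\<forall>n. \<rho>' n \<in> PT P (\<rho> n)"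
  shows "cls \<rho>' \<theta> \<subseteq> PTs P (cls \<rho> t)"
  using assms
proof (induction t arbitrary: \<theta> \<rho> \<rho>')
  case (Mu t)
  from Mu.prems(1) obtain b where b: "\<theta> = Mu b" "b \<in> PT P t" by auto
  then have top: "subst \<rho>' (Mu b) \<in> PT P (subst \<rho> (Mu t))"
    using PT_subst[OF Mu.prems] by simp
  have "cls (case_nat (subst \<rho>' (Mu b)) \<rho>') b \<subseteq> PTs P (cls (case_nat (subst \<rho> (Mu t)) \<rho>) t)"
    using b(2) PT_case_nat[OF top Mu.prems(2)] by (rule Mu.IH)
  with b top show ?case by (auto simp only: cls.simps PTs_def)
next
  case (Nu t)
  from Nu.prems(1) obtain b where b: "\<theta> = Nu b" "b \<in> PT P t" by auto
  then have top: "subst \<rho>' (Nu b) \<in> PT P (subst \<rho> (Nu t))"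
    using PT_subst[OF Nu.prems] by simp
  have "cls (case_nat (subst \<rho>' (Nu b)) \<rho>') b \<subseteq> PTs P (cls (case_nat (subst \<rho> (Nu t)) \<rho>) t)"
    using b(2) PT_case_nat[OF top Nu.prems(2)] by (rule Nu.IH)
  with b top show ?case by (auto simp only: cls.simps PTs_def)
next
  case (And t1 t2)
  from And.prems(1) obtain b1 b2 where b: "\<theta> = And b1 b2" "b1 \<in> PT P t1" "b2 \<in> PT P t2"
    by auto
  have "subst \<rho>' \<theta> \<in> PT P (subst \<rho> (And t1 t2))"
    using PT_subst[OF And.prems] .
  with b And.IH(1)[OF b(2) And.prems(2)] And.IH(2)[OF b(3) And.prems(2)] show ?case
    by (auto simp: PTs_def)
next
  case (Or t1 t2)
  from Or.prems(1) obtain b1 b2 where b: "\<theta> = Or b1 b2" "b1 \<in> PT P t1" "b2 \<in> PT P t2"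
    by auto
  have "subst \<rho>' \<theta> \<in> PT P (subst \<rho> (Or t1 t2))"
    using PT_subst[OF Or.prems] .
  with b Or.IH(1)[OF b(2) Or.prems(2)] Or.IH(2)[OF b(3) Or.prems(2)] show ?case
    by (auto simp: PTs_def)
next
  case (Dia Q t)
  from Dia.prems(1) obtain Q' b where b: "\<theta> = Dia (Q \<union> Q') b" "b \<in> PT P t"
    by auto
  have "subst \<rho>' \<theta> \<in> PT P (subst \<rho> (Dia Q t))"
    using PT_subst[OF Dia.prems] .
  with b Dia.IH[OF b(2) Dia.prems(2)] show ?case
    by (auto simp: PTs_def)
next
  case (Box Q t)
  from Box.prems(1) obtain Q' b where b: "\<theta> = Box (Q \<union> Q') b" "b \<in> PT P t"
    by auto
  have "subst \<rho>' \<theta> \<in> PT P (subst \<rho> (Box Q t))"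
    using PT_subst[OF Box.prems] .
  with b Box.IH[OF b(2) Box.prems(2)] show ?case
    by (auto simp: PTs_def)
qed (auto simp: PTs_def)

lemma CLs_mono: "L \<subseteq> M \<Longrightarrow> CLs L \<subseteq> CLs M"
  unfolding CLs_def by blast

lemma PTs_mono: "L \<subseteq> M \<Longrightarrow> PTs P L \<subseteq> PTs P M"
  unfolding PTs_def by blast

lemma subset_PTs: "L \<subseteq> PTs P L"
  unfolding PTs_def using PT_refl by blast

lemma CLs_idem: "CLs (CLs L) = CLs L"
proof
  show "CLs (CLs L) \<subseteq> CLs L"
    using CL_subset_CL unfolding CLs_def by blast
  show "CLs L \<subseteq> CLs (CLs L)"
    using CL_refl unfolding CLs_def by blast
qed

lemma PTs_idem: "PTs P (PTs P L) = PTs P L"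
proof
  show "PTs P (PTs P L) \<subseteq> PTs P L"
    unfolding PTs_def by (blast intro: PT_trans)
qed (rule subset_PTs)

lemma CL_PT_subset: "\<theta> \<in> PT P t \<Longrightarrow> CL \<theta> \<subseteq> PTs P (CL t)"
  unfolding CL_def by (rule cls_PT_subset) simp_all

lemma CLs_PTs_subset: "CLs (PTs P L) \<subseteq> PTs P (CLs L)"
proof
  fix \<chi> assume "\<chi> \<in> CLs (PTs P L)"
  then obtain \<phi> \<theta> where "\<phi> \<in> L" "\<theta> \<in> PT P \<phi>" "\<chi> \<in> CL \<theta>"
    unfolding CLs_def PTs_def by blast
  then have "\<chi> \<in> PTs P (CL \<phi>)" and "CL \<phi> \<subseteq> CLs L"
    using CL_PT_subset unfolding CLs_def by blast+
  then show "\<chi> \<in> PTs P (CLs L)"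
    using PTs_mono by blast
qed

lemma CL_P_idem: "CL_P P (CL_P P L) = CL_P P L"
proof
  have "CL_P P (CL_P P L) \<subseteq> PTs P (PTs P (CLs (CLs L)))"
    unfolding CL_P_def by (rule PTs_mono[OF CLs_PTs_subset])
  then show "CL_P P (CL_P P L) \<subseteq> CL_P P L"
    by (simp add: CL_P_def PTs_idem CLs_idem)
next
  have "CLs (CLs L) \<subseteq> CLs (PTs P (CLs L))"
    by (rule CLs_mono[OF subset_PTs])
  then show "CL_P P L \<subseteq> CL_P P (CL_P P L)"
    unfolding CL_P_def CLs_idem by (rule PTs_mono)
qed

theorem lemma3p4:
  fixes \<sigma> P :: "'a set" and L :: "'a fm set"
  assumes "finite P" and "\<sigma> \<inter> P = {}" and "L \<subseteq> Lmu (\<sigma> \<union> P)"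
  shows "CL_P P (CL_P P L) = CL_P P L"
  by (rule CL_P_idem)

end
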